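(* In the setting of the context, fix $r\in\{0,\dots,d\}$ and assume that in $\Delta$ vertex $r$ is adjacent to exactly one other vertex. Then $a^*_r\ne\theta^*_0$.
   Context: Let $\mathbb F$ be a field, $d\ge1$ an integer, $V$ a vector space over $\mathbb F$ of dimension $d+1$, $\mathcal A=\mathrm{End}(V)$ with identity $I$. Let $E^*_0,\dots,E^*_d\in\mathcal A$ satisfy $E^*_iE^*_j=\delta_{i,j}E^*_i$ and $\mathrm{rank}(E^*_i)=1$ for $0\le i,j\le d$. Let $A\in\mathcal A$ satisfy $E^*_iAE^*_j=0$ if $|i-j|>1$ and $E^*_iAE^*_j\neq0$ if $|i-j|=1$. Assume $A$ has $d+1$ mutually distinct eigenvalues $\theta_0,\dots,\theta_d$ in $\mathbb F$, and let $E_i=\prod_{j\ne i}\frac{A-\theta_jI}{\theta_i-\theta_j}$ be the primitive idempotent of $A$ for $\theta_i$. Let $\theta^*_0,\dots,\theta^*_d\in\mathbb F$ and $A^*=\sum_{i=0}^d\theta^*_iE^*_i$. Define $a^*_i=\mathrm{tr}(E_iA^* )$. Let $\Delta$ be the graph on vertex set $\{0,\dots,d\}$ in which $i,j$ are adjacent iff $i\ne j$ and $E_iA^*E_j\ne0$. *)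

theory Defs
  imports "HOL-Analysis.Analysis"
begin

text \<open>Primitive idempotent of A for the eigenvalue th i, among th 0 .. th d:
  E_i = prod over j in {0..d}, j ~= i, of (A - th j I)/(th i - th j).
  (The factors commute, so the order of the product is immaterial.)\<close>
definition prim_idem :: "('a::field)^'n^'n \<Rightarrow> (nat \<Rightarrow> 'a) \<Rightarrow> nat \<Rightarrow> nat \<Rightarrow> 'a^'n^'n" where
  "prim_idem A th d i =
     foldr (\<lambda>j M. (mat (1 / (th i - th j)) ** (A - mat (th j))) ** M)
           (filter (\<lambda>j. j \<noteq> i) [0..<Suc d]) (mat 1)"

end

theory Submission imports Defs begin

text \<open>Write E*_i for the rank-one idempotents Es i and E_j for the primitive
   idempotents of A.  Suppose tr (E_r A*) = theta*_0 and let s be the unique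
   neighbour of r.  Since E_r has rank one, E_r A* E_r = tr (E_r A*) E_r, and
   sum_j E_j = I gives E_r A* = theta*_0 E_r + Y with Y = E_r A* E_s ~= 0.
   Multiplying on the right by E*_0 (on which A* acts as theta*_0) yields
   Y E*_0 = 0; moreover Y A = theta_s Y.  The tridiagonality of A with respect
   to the rank-one E*_i then propagates Y E*_i = 0 from i = 0 up to i = d, so
   Y = 0, a contradiction.\<close>

lemma mat_mult_entry: "(mat c ** M) $ i $ j = (c::'a::comm_ring_1) * M $ i $ j"
  by (simp add: matrix_matrix_mult_def mat_def if_distrib if_distribR sum.delta' cong: if_cong)

lemma mat_commute: "M ** mat c = mat (c::'a::comm_ring_1) ** M"
  by (simp add: vec_eq_iff mat_mult_entry matrix_matrix_mult_def mat_def
      if_distrib if_distribR sum.delta' mult.commute cong: if_cong)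

lemma mat_vector_mult: "mat c *v x = (c::'a::comm_ring_1) *s x"
  by (simp add: vec_eq_iff matrix_vector_mult_def mat_def if_distrib if_distribR sum.delta'
      cong: if_cong)

lemma matrix_add_rdistrib: "(B + C) ** (A::'a::comm_ring_1^'n^'m) = B ** A + C ** A"
  by (vector matrix_matrix_mult_def sum.distrib[symmetric] field_simps)

lemma matrix_mult_sum_right: "(X::'a::comm_ring_1^'n^'m) ** sum f S = (\<Sum>i\<in>S. X ** f i)"
  by (induct S rule: infinite_finite_induct) (auto simp: matrix_add_ldistrib)

lemma matrix_mult_sum_left: "sum f S ** (X::'a::comm_ring_1^'n^'m) = (\<Sum>i\<in>S. f i ** X)"
  by (induct S rule: infinite_finite_induct) (auto simp: matrix_add_rdistrib)

lemma sum_matrix_vector_mult: "sum f S *v (x::'a::comm_ring_1^'n) = (\<Sum>i\<in>S. f i *v x)"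
  by (induct S rule: infinite_finite_induct) (auto simp: matrix_vector_mult_add_rdistrib)

section \<open>Rank-one matrices as outer products\<close>

definition outer :: "'a::comm_ring_1^'n \<Rightarrow> 'a^'m \<Rightarrow> 'a^'m^'n" where
  "outer p q = (\<chi> a b. p$a * q$b)"

definition dotv :: "'a::comm_ring_1^'n \<Rightarrow> 'a^'n \<Rightarrow> 'a" where
  "dotv q p = (\<Sum>b\<in>UNIV. q$b * p$b)"

lemma mult_outer: "X ** outer p q = outer (X *v p) q"
  by (simp add: vec_eq_iff outer_def matrix_vector_mult_def matrix_matrix_mult_def
      sum_distrib_left sum_distrib_right mult_ac)

lemma outer_mult: "outer p q ** X = outer p (q v* X)"
  by (simp add: vec_eq_iff outer_def vector_matrix_mult_def matrix_matrix_mult_def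
      sum_distrib_left mult_ac)

lemma outer_outer: "outer p q ** outer p' q' = mat (dotv q p') ** outer p q'"
  unfolding vec_eq_iff mat_mult_entry
  by (simp add: outer_def dotv_def matrix_matrix_mult_def sum_distrib_left sum_distrib_right mult_ac)

lemma outer_eq_0: "outer p q = (0::'a::field^'m^'n) \<longleftrightarrow> p = 0 \<or> q = 0"
  by (auto simp: vec_eq_iff outer_def)

lemma outer_sandwich_trace:
  "outer p q ** X ** outer p q = mat (trace (outer p q ** X)) ** outer p q"
proof -
  have "trace (outer p q ** X) = dotv (q v* X) p"
    unfolding outer_mult by (simp add: trace_def outer_def dotv_def mult.commute)
  then show ?thesis unfolding outer_mult[of p q X] outer_outer by simp
qed

lemma outer_if_image_in_line:
  fixes M :: "'a::field^'n^'m"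
  assumes "\<And>x. M *v x \<in> vec.span {w}"
  shows "\<exists>g. M = outer w g"
proof -
  have "\<forall>b. \<exists>c. M *v axis b 1 = c *s w"
    using assms by (auto simp: vec.span_singleton)
  then obtain g where g: "\<And>b. M *v axis b 1 = g b *s w" by metis
  have "M $ a $ b = w $ a * g b" for a b
    using arg_cong[OF g[of b], of "\<lambda>v. v $ a"]
    by (simp add: matrix_vector_mult_def axis_def if_distrib if_distribR sum.delta'
        mult.commute cong: if_cong)
  then have "M = outer w (\<chi> b. g b)" by (simp add: vec_eq_iff outer_def)
  then show ?thesis ..
qed

text \<open>Over any field, a matrix of rank one is an outer product: its rows all lie on
  the line spanned by a single row vector.\<close>
lemma rank_one_outer:
  fixes M :: "'a::field^'n^'m"
  assumes "rank M = 1"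
  shows "\<exists>p q. M = outer p q"
proof -
  obtain B where B: "vec.independent B" "rows M \<subseteq> vec.span B" "card B = vec.dim (rows M)"
    using vec.basis_exists by blast
  with assms obtain q where "B = {q}" by (auto simp: row_rank_def_gen card_1_singleton_iff)
  then have "\<forall>i. \<exists>c. row i M = c *s q"
    using B(2) by (auto simp: rows_def vec.span_singleton)
  then obtain c where c: "\<And>i. row i M = c i *s q" by metis
  have "M = outer (\<chi> i. c i) q"
    using c by (simp add: vec_eq_iff outer_def row_def)
  then show ?thesis by blast
qed

lemma rank_one_nonzero: "rank (M::'a::field^'n^'m) = 1 \<Longrightarrow> M \<noteq> 0"
  by (auto simp: row_rank_def_gen rows_def row_def)

lemma rank_one_cancel:
  fixes E :: "'a::field^'n^'m"
  assumes "rank E = 1" and EM: "E ** M \<noteq> 0" and YEM: "Y ** E ** M = 0"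
  shows "Y ** E = 0"
proof -
  obtain p q where E: "E = outer p q" using rank_one_outer[OF assms(1)] by blast
  have "q v* M \<noteq> 0" using EM unfolding E outer_mult by (simp add: outer_eq_0)
  moreover have "outer (Y *v p) (q v* M) = 0"
    using YEM unfolding E mult_outer outer_mult by simp
  ultimately have "Y *v p = 0" by (simp add: outer_eq_0)
  then show ?thesis unfolding E mult_outer by (simp add: outer_eq_0)
qed

section \<open>Resolutions of the identity\<close>

text \<open>If \<open>d + 1\<close> matrices \<open>M j\<close> act on \<open>d + 1\<close> nonzero vectors \<open>v i\<close> by
  \<open>M j v i = \<delta>\<^sub>i\<^sub>j v i\<close>, then the \<open>v i\<close> are independent, hence a basis of the
  \<open>(d + 1)\<close>-dimensional space.\<close>
lemma dual_family_spans:
  fixes v :: "nat \<Rightarrow> 'a::field^'n" and M :: "nat \<Rightarrow> 'a^'n^'n"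
  assumes card: "CARD('n) = d + 1"
    and dual: "\<And>i j. i \<le> d \<Longrightarrow> j \<le> d \<Longrightarrow> M j *v v i = (if i = j then v i else 0)"
    and nz: "\<And>i. i \<le> d \<Longrightarrow> v i \<noteq> 0"
  shows "vec.span (v ` {..d}) = UNIV"
proof -
  have inj: "inj_on v {..d}"
  proof (rule inj_onI)
    fix i j assume "i \<in> {..d}" "j \<in> {..d}" "v i = v j"
    then show "i = j" using dual[of i j] dual[of j j] nz[of j] by (auto split: if_splits)
  qed
  have ind: "vec.independent (v ` {..d})"
  proof (rule vec.independent_if_scalars_zero)
    fix f x assume s: "(\<Sum>x\<in>v ` {..d}. f x *s x) = 0" and "x \<in> v ` {..d}"
    then obtain j where j: "j \<le> d" "x = v j" by auto
    have proj: "M j *v y = (if y = v j then y else 0)" if "y \<in> v ` {..d}" for y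
      using that j dual inj by (auto dest: inj_onD)
    have "0 = M j *v (\<Sum>x\<in>v ` {..d}. f x *s x)" using s by simp
    also have "\<dots> = (\<Sum>y\<in>v ` {..d}. f y *s (M j *v y))"
      by (simp add: vec.sum vec.scale)
    also have "\<dots> = (\<Sum>y\<in>v ` {..d}. if y = v j then f y *s y else 0)"
      by (rule sum.cong) (auto simp: proj)
    also have "\<dots> = f x *s x" using j by (simp add: sum.delta')
    finally show "f x = 0" using nz j by (metis vector_mul_eq_0)
  qed simp
  have "card (v ` {..d}) = vec.dim (UNIV :: ('a^'n) set)"
    using card_image[OF inj] card by (simp add: card_cart_basis)
  then show ?thesis using vec.card_eq_dim[of "v ` {..d}" UNIV] ind by auto
qed

lemma matrix_eq_on_span:
  fixes X Y :: "'a::field^'n^'m"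
  assumes sp: "vec.span S = UNIV" and eq: "\<And>x. x \<in> S \<Longrightarrow> X *v x = Y *v x"
  shows "X = Y"
proof -
  have "vec.subspace {x. X *v x = Y *v x}"
    by (auto simp: vec.subspace_def vec.add vec.scale)
  then have "X *v x = Y *v x" for x
    using vec.span_induct[of x S] eq sp by blast
  then show ?thesis by (simp add: matrix_eq)
qed

lemma dual_family_sum:
  fixes v :: "nat \<Rightarrow> 'a::field^'n" and M :: "nat \<Rightarrow> 'a^'n^'n"
  assumes card: "CARD('n) = d + 1"
    and dual: "\<And>i j. i \<le> d \<Longrightarrow> j \<le> d \<Longrightarrow> M j *v v i = (if i = j then v i else 0)"
    and nz: "\<And>i. i \<le> d \<Longrightarrow> v i \<noteq> 0"
  shows "(\<Sum>j\<le>d. M j) = mat 1"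
proof (rule matrix_eq_on_span[OF dual_family_spans[OF card dual nz]])
  fix x assume "x \<in> v ` {..d}"
  then obtain k where k: "k \<le> d" "x = v k" by auto
  have "(\<Sum>j\<le>d. M j) *v x = (\<Sum>j\<le>d. if k = j then v k else 0)"
    unfolding sum_matrix_vector_mult by (rule sum.cong) (use k dual in auto)
  then show "(\<Sum>j\<le>d. M j) *v x = mat 1 *v x" using k by simp
qed

text \<open>\<open>d + 1\<close> nonzero pairwise orthogonal idempotents in dimension \<open>d + 1\<close> sum to the
  identity: apply \<open>dual_family_sum\<close> to a nonzero vector from the image of each.\<close>
lemma orthogonal_idempotents_sum:
  fixes E :: "nat \<Rightarrow> 'a::field^'n^'n"
  assumes card: "CARD('n) = d + 1"
    and idem: "\<And>i j. i \<le> d \<Longrightarrow> j \<le> d \<Longrightarrow> E i ** E j = (if i = j then E i else 0)"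
    and nz: "\<And>i. i \<le> d \<Longrightarrow> E i \<noteq> 0"
  shows "(\<Sum>i\<le>d. E i) = mat 1"
proof -
  have "\<forall>i. \<exists>x. i \<le> d \<longrightarrow> E i *v x \<noteq> 0"
    using nz by (metis matrix_eq matrix_vector_mult_0)
  then obtain x where x: "\<And>i. i \<le> d \<Longrightarrow> E i *v x i \<noteq> 0" by metis
  show ?thesis
  proof (rule dual_family_sum[OF card _ x])
    fix i j assume "i \<le> d" "j \<le> d"
    then show "E j *v (E i *v x i) = (if i = j then E i *v x i else 0)"
      by (simp add: matrix_vector_mul_assoc idem)
  qed
qed

lemma diagonal_combination_mult:
  fixes E :: "nat \<Rightarrow> 'a::field^'n^'n"
  assumes idem: "\<And>i j. i \<le> d \<Longrightarrow> j \<le> d \<Longrightarrow> E i ** E j = (if i = j then E i else 0)"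
    and j: "j \<le> d"
  shows "(\<Sum>i\<le>d. mat (c i) ** E i) ** E j = mat (c j) ** E j"
proof -
  have "(\<Sum>i\<le>d. mat (c i) ** E i) ** E j = (\<Sum>i\<le>d. if i = j then mat (c j) ** E j else 0)"
    unfolding matrix_mult_sum_left
    by (rule sum.cong) (auto simp: idem j matrix_mul_assoc[symmetric])
  then show ?thesis using j by simp
qed

lemma resolution_two_components:
  fixes P :: "nat \<Rightarrow> 'a::field^'n^'n"
  assumes sum: "(\<Sum>j\<le>d. P j) = mat 1" and rs: "r \<le> d" "s \<le> d" "s \<noteq> r"
    and zero: "\<And>j. j \<le> d \<Longrightarrow> j \<noteq> r \<Longrightarrow> j \<noteq> s \<Longrightarrow> P r ** X ** P j = 0"
  shows "P r ** X = P r ** X ** P r + P r ** X ** P s"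
proof -
  have "P r ** X = (\<Sum>j\<le>d. P r ** X ** P j)"
    using sum matrix_mult_sum_right[of "P r ** X" P "{..d}"] by simp
  also have "\<dots> = (\<Sum>j\<in>{r, s}. P r ** X ** P j)"
    by (rule sum.mono_neutral_right) (use rs zero in auto)
  finally show ?thesis using rs by simp
qed

section \<open>Primitive idempotents\<close>

lemma foldr_factors_eigvec:
  fixes A :: "'a::field^'n^'n"
  assumes v: "A *v v = t *s v"
  shows "foldr (\<lambda>k M. (mat (1 / (u - th k)) ** (A - mat (th k))) ** M) ks (mat 1) *v v
         = (\<Prod>k\<leftarrow>ks. (t - th k) / (u - th k)) *s v"
proof (induct ks)
  case (Cons k ks)
  let ?c = "\<Prod>k\<leftarrow>ks. (t - th k) / (u - th k)"
  have "mat (1 / (u - th k)) *v ((A - mat (th k)) *v (?c *s v))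
        = ((t - th k) / (u - th k) * ?c) *s v"
    by (simp add: mat_vector_mult matrix_vector_mult_diff_rdistrib vec.scale v vec_eq_iff
        algebra_simps diff_divide_distrib)
  then show ?case using Cons by (simp add: matrix_vector_mul_assoc[symmetric])
qed simp

lemma prim_idem_eigvec:
  fixes A :: "'a::field^'n^'n"
  assumes th: "inj_on th {0..d}" and ij: "i \<le> d" "j \<le> d" and v: "A *v v = th i *s v"
  shows "prim_idem A th d j *v v = (if i = j then v else 0)"
proof -
  let ?ks = "filter (\<lambda>k. k \<noteq> j) [0..<Suc d]"
  let ?f = "\<lambda>k. (th i - th k) / (th j - th k)"
  have "prim_idem A th d j *v v = prod_list (map ?f ?ks) *s v"
    unfolding prim_idem_def by (rule foldr_factors_eigvec[OF v])
  moreover have "prod_list (map ?f ?ks) = 1" if "i = j"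
  proof -
    have "map ?f ?ks = map (\<lambda>_. 1) ?ks"
      using that th ij by (auto simp del: upt_Suc dest: inj_onD)
    then show ?thesis by (simp add: map_replicate_const del: upt_Suc)
  qed
  moreover have "prod_list (map ?f ?ks) = 0" if "i \<noteq> j"
    using that ij by (auto simp: prod_list_zero_iff simp del: upt_Suc)
  ultimately show ?thesis by simp
qed

context
  fixes A :: "'a::field^'n^'n" and th :: "nat \<Rightarrow> 'a" and d :: nat
  assumes card: "CARD('n) = d + 1"
    and th_distinct: "inj_on th {0..d}"
    and th_eig: "\<And>i. i \<le> d \<Longrightarrow> \<exists>v. v \<noteq> 0 \<and> A *v v = th i *s v"
begin

lemma prim_idem_eigenbasis:
  obtains v where "\<And>i. i \<le> d \<Longrightarrow> v i \<noteq> 0" and "\<And>i. i \<le> d \<Longrightarrow> A *v v i = th i *s v i"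
    and "\<And>i j. i \<le> d \<Longrightarrow> j \<le> d \<Longrightarrow> prim_idem A th d j *v v i = (if i = j then v i else 0)"
    and "vec.span (v ` {..d}) = UNIV"
proof -
  have "\<forall>i. \<exists>v. i \<le> d \<longrightarrow> v \<noteq> 0 \<and> A *v v = th i *s v" using th_eig by metis
  then obtain v where v: "\<And>i. i \<le> d \<Longrightarrow> v i \<noteq> 0 \<and> A *v v i = th i *s v i" by metis
  have dual: "prim_idem A th d j *v v i = (if i = j then v i else 0)"
    if "i \<le> d" "j \<le> d" for i j
    using prim_idem_eigvec[OF th_distinct that conjunct2[OF v[OF that(1)]]] .
  have nz: "\<And>i. i \<le> d \<Longrightarrow> v i \<noteq> 0" and eig: "\<And>i. i \<le> d \<Longrightarrow> A *v v i = th i *s v i"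
    using v by blast+
  show ?thesis by (rule that[OF nz eig dual dual_family_spans[OF card dual nz]])
qed

lemma prim_idem_sum: "(\<Sum>j\<le>d. prim_idem A th d j) = mat 1"
proof -
  obtain v where nz: "\<And>i. i \<le> d \<Longrightarrow> v i \<noteq> 0"
    and "\<And>i. i \<le> d \<Longrightarrow> A *v v i = th i *s v i"
    and dual: "\<And>i j. i \<le> d \<Longrightarrow> j \<le> d \<Longrightarrow> prim_idem A th d j *v v i = (if i = j then v i else 0)"
    and "vec.span (v ` {..d}) = UNIV"
    using prim_idem_eigenbasis by blast
  show ?thesis by (rule dual_family_sum[OF card dual nz])
qed

lemma prim_idem_mult_A:
  assumes s: "s \<le> d"
  shows "prim_idem A th d s ** A = mat (th s) ** prim_idem A th d s"
proof -
  obtain v where "\<And>i. i \<le> d \<Longrightarrow> v i \<noteq> 0"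
    and eig: "\<And>i. i \<le> d \<Longrightarrow> A *v v i = th i *s v i"
    and dual: "\<And>i j. i \<le> d \<Longrightarrow> j \<le> d \<Longrightarrow> prim_idem A th d j *v v i = (if i = j then v i else 0)"
    and sp: "vec.span (v ` {..d}) = UNIV"
    using prim_idem_eigenbasis by blast
  show ?thesis
  proof (rule matrix_eq_on_span[OF sp])
    fix x assume "x \<in> v ` {..d}"
    then obtain k where k: "k \<le> d" "x = v k" by auto
    then show "(prim_idem A th d s ** A) *v x = (mat (th s) ** prim_idem A th d s) *v x"
      using dual[OF k(1) s] eig[OF k(1)]
      by (simp add: matrix_vector_mul_assoc[symmetric] vec.scale mat_vector_mult)
  qed
qed

text \<open>Each \<open>E\<^sub>r\<close> has rank one, hence \<open>E\<^sub>r X E\<^sub>r = tr (E\<^sub>r X) E\<^sub>r\<close>.\<close>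
lemma prim_idem_sandwich:
  assumes r: "r \<le> d"
  shows "prim_idem A th d r ** X ** prim_idem A th d r
         = mat (trace (prim_idem A th d r ** X)) ** prim_idem A th d r"
proof -
  obtain v where "\<And>i. i \<le> d \<Longrightarrow> v i \<noteq> 0"
    and "\<And>i. i \<le> d \<Longrightarrow> A *v v i = th i *s v i"
    and dual: "\<And>i j. i \<le> d \<Longrightarrow> j \<le> d \<Longrightarrow> prim_idem A th d j *v v i = (if i = j then v i else 0)"
    and sp: "vec.span (v ` {..d}) = UNIV"
    using prim_idem_eigenbasis by blast
  have "prim_idem A th d r *v x \<in> vec.span {v r}" for x
  proof -
    have "(*v) (prim_idem A th d r) ` v ` {..d} \<subseteq> vec.span {v r}"
      using dual r by (auto simp: vec.span_base vec.span_zero)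
    then have "vec.span ((*v) (prim_idem A th d r) ` v ` {..d}) \<subseteq> vec.span {v r}"
      by (simp add: vec.span_minimal)
    then show ?thesis unfolding vec.span_image sp by blast
  qed
  then obtain g where "prim_idem A th d r = outer (v r) g"
    using outer_if_image_in_line by blast
  then show ?thesis using outer_sandwich_trace by simp
qed

end

section \<open>Propagation along a tridiagonal structure\<close>

text \<open>A matrix \<open>Y\<close> with \<open>Y A = t Y\<close> and \<open>Y Es 0 = 0\<close>
  satisfies \<open>Y Es (k + 1) = 0\<close> whenever \<open>Y Es i = 0\<close> for all \<open>i \<le> k\<close>: expanding
  \<open>0 = t Y Es k = Y A Es k\<close> leaves only the term \<open>Y Es (k + 1) A Es k\<close>.\<close>
lemma tridiagonal_step:
  fixes Es :: "nat \<Rightarrow> 'a::field^'n^'n" and Y :: "'a^'n^'m"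
  assumes Es_sum: "(\<Sum>i\<le>d. Es i) = mat 1"
    and Es_rank: "rank (Es (Suc k)) = 1"
    and A_tri0: "\<And>j. j \<le> d \<Longrightarrow> j > Suc k \<Longrightarrow> Es j ** A ** Es k = 0"
    and A_tri1: "Es (Suc k) ** A ** Es k \<noteq> 0"
    and YA: "Y ** A = mat t ** Y"
    and IH: "\<And>i. i \<le> k \<Longrightarrow> Y ** Es i = 0"
    and k: "Suc k \<le> d"
  shows "Y ** Es (Suc k) = 0"
proof (rule rank_one_cancel[OF Es_rank])
  show "Es (Suc k) ** (A ** Es k) \<noteq> 0" using A_tri1 by (simp add: matrix_mul_assoc)
  have "Y ** A ** Es k = Y ** (\<Sum>j\<le>d. Es j) ** A ** Es k" using Es_sum by simp
  also have "\<dots> = (\<Sum>j\<le>d. Y ** Es j ** A ** Es k)"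
    by (simp add: matrix_mult_sum_right matrix_mult_sum_left)
  also have "\<dots> = (\<Sum>j\<in>{Suc k}. Y ** Es j ** A ** Es k)"
  proof (rule sum.mono_neutral_right)
    show "\<forall>j\<in>{..d} - {Suc k}. Y ** Es j ** A ** Es k = 0"
    proof
      fix j assume j: "j \<in> {..d} - {Suc k}"
      show "Y ** Es j ** A ** Es k = 0"
      proof (cases "j \<le> k")
        case True
        then show ?thesis using IH by simp
      next
        case False
        then have "Es j ** A ** Es k = 0" using j A_tri0 by auto
        then show ?thesis by (simp flip: matrix_mul_assoc)
      qed
    qed
  qed (use k in auto)
  finally have "Y ** A ** Es k = Y ** Es (Suc k) ** A ** Es k" by simp
  moreover have "Y ** A ** Es k = 0"
    using IH[of k] by (simp add: YA flip: matrix_mul_assoc)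
  ultimately show "Y ** Es (Suc k) ** (A ** Es k) = 0" by (simp add: matrix_mul_assoc)
qed

lemma tridiagonal_left_eigen_vanishes:
  fixes Es :: "nat \<Rightarrow> 'a::field^'n^'n" and Y :: "'a^'n^'m"
  assumes Es_sum: "(\<Sum>i\<le>d. Es i) = mat 1"
    and Es_rank: "\<And>i. i \<le> d \<Longrightarrow> rank (Es i) = 1"
    and A_tri0: "\<And>i j. i \<le> d \<Longrightarrow> j \<le> d \<Longrightarrow> (i > j + 1 \<or> j > i + 1) \<Longrightarrow> Es i ** A ** Es j = 0"
    and A_tri1: "\<And>i j. i \<le> d \<Longrightarrow> j \<le> d \<Longrightarrow> (i = j + 1 \<or> j = i + 1) \<Longrightarrow> Es i ** A ** Es j \<noteq> 0"
    and YA: "Y ** A = mat t ** Y"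
    and Y0: "Y ** Es 0 = 0"
  shows "Y = 0"
proof -
  have "\<forall>i\<le>k. Y ** Es i = 0" if "k \<le> d" for k
    using that
  proof (induct k)
    case (Suc k)
    then have "Y ** Es (Suc k) = 0"
      by (intro tridiagonal_step[OF Es_sum Es_rank _ _ YA]) (use A_tri0 A_tri1[of "Suc k" k] in auto)
    then show ?case using Suc by (auto simp: le_Suc_eq)
  qed (simp add: Y0)
  then have "(\<Sum>i\<le>d. Y ** Es i) = 0" by simp
  then show ?thesis using Es_sum matrix_mult_sum_right[of Y Es "{..d}"] by simp
qed

theorem lemma7p12:
  fixes d r :: nat
    and Es :: "nat \<Rightarrow> ('a::field)^'n^'n"
    and A :: "'a^'n^'n"
    and th ths :: "nat \<Rightarrow> 'a"
  assumes d1: "d \<ge> 1"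
    and dimV: "CARD('n) = d + 1"
    and Es_idem: "\<And>i j. i \<le> d \<Longrightarrow> j \<le> d \<Longrightarrow> Es i ** Es j = (if i = j then Es i else 0)"
    and Es_rank: "\<And>i. i \<le> d \<Longrightarrow> rank (Es i) = 1"
    and A_tri0: "\<And>i j. i \<le> d \<Longrightarrow> j \<le> d \<Longrightarrow> (i > j + 1 \<or> j > i + 1) \<Longrightarrow> Es i ** A ** Es j = 0"
    and A_tri1: "\<And>i j. i \<le> d \<Longrightarrow> j \<le> d \<Longrightarrow> (i = j + 1 \<or> j = i + 1) \<Longrightarrow> Es i ** A ** Es j \<noteq> 0"
    and th_distinct: "inj_on th {0..d}"
    and th_eig: "\<And>i. i \<le> d \<Longrightarrow> \<exists>v. v \<noteq> 0 \<and> A *v v = th i *s v"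
    and r_le: "r \<le> d"
    and deg1: "card {j. j \<le> d \<and> j \<noteq> r \<and>
                 prim_idem A th d r ** (\<Sum>i\<le>d. mat (ths i) ** Es i) ** prim_idem A th d j \<noteq> 0} = 1"
  shows "trace (prim_idem A th d r ** (\<Sum>i\<le>d. mat (ths i) ** Es i)) \<noteq> ths 0"
proof
  define P where "P = prim_idem A th d"
  define Ast where "Ast = (\<Sum>i\<le>d. mat (ths i) ** Es i)"
  assume "trace (prim_idem A th d r ** (\<Sum>i\<le>d. mat (ths i) ** Es i)) = ths 0"
  then have trace0: "trace (P r ** Ast) = ths 0" by (simp add: P_def Ast_def)
  obtain s where S: "{j. j \<le> d \<and> j \<noteq> r \<and> P r ** Ast ** P j \<noteq> 0} = {s}"
    using deg1 unfolding P_def Ast_def by (auto simp: card_1_singleton_iff)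
  define Y where "Y = P r ** Ast ** P s"
  have s: "s \<le> d" "s \<noteq> r" "Y \<noteq> 0" using S by (auto simp: Y_def)
  have "P r ** Ast = mat (ths 0) ** P r + Y"
    using resolution_two_components[of P d r s Ast] S s r_le trace0
      prim_idem_sandwich[OF dimV th_distinct th_eig r_le] prim_idem_sum[OF dimV th_distinct th_eig]
    by (auto simp: P_def Y_def)
  moreover have "P r ** Ast ** Es 0 = mat (ths 0) ** (P r ** Es 0)"
  proof -
    have "Ast ** Es 0 = mat (ths 0) ** Es 0"
      unfolding Ast_def by (rule diagonal_combination_mult[OF Es_idem le0])
    then show ?thesis by (simp add: matrix_mul_assoc mat_commute flip: matrix_mul_assoc[of "P r"])
  qed
  ultimately have Y0: "Y ** Es 0 = 0"
    by (simp add: matrix_add_rdistrib matrix_mul_assoc)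
  have "Y ** A = P r ** Ast ** (P s ** A)" by (simp add: Y_def matrix_mul_assoc)
  also have "\<dots> = P r ** Ast ** mat (th s) ** P s"
    using prim_idem_mult_A[OF dimV th_distinct th_eig s(1)] by (simp add: P_def matrix_mul_assoc)
  finally have YA: "Y ** A = mat (th s) ** Y" by (simp add: Y_def mat_commute matrix_mul_assoc)
  have Es_sum: "(\<Sum>i\<le>d. Es i) = mat 1"
    by (rule orthogonal_idempotents_sum[OF dimV Es_idem rank_one_nonzero[OF Es_rank]])
  show False
    using tridiagonal_left_eigen_vanishes[OF Es_sum Es_rank A_tri0 A_tri1 YA Y0] s(3) by simp
qed

end
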